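(* Let $a,\Theta\in l_0(\mathbb{Z})$ be filters, neither identically zero, with $\Theta^\star=\Theta$, and suppose $\det\mathcal M_{a,\Theta}(z)\equiv0$. Then $\Theta$ does not change sign on $\mathbb{T}$, i.e. either $\Theta(z)\ge0$ for all $z\in\mathbb{T}$ or $\Theta(z)\le0$ for all $z\in\mathbb{T}$. Moreover, $\Theta(z)\ge0$ on $\mathbb{T}$ if and only if $s^+_{a,\Theta}=1$ and $s^-_{a,\Theta}=0$, and $\Theta(z)\le0$ on $\mathbb{T}$ if and only if $s^+_{a,\Theta}=0$ and $s^-_{a,\Theta}=1$.
   Context: $l_0(\mathbb{Z})$: finitely supported sequences $u$, with $u(z)=\sum_ku(k)z^k$ and $u^\star(z)=\sum_k\overline{u(k)}z^{-k}$. $\mathbb{T}$ is the unit circle (note $\Theta(z)\in\mathbb{R}$ for $z\in\mathbb{T}$ since $\Theta^\star=\Theta$). $\mathcal M_{a,\Theta}(z)=\begin{bmatrix}\Theta(z)-\Theta(z^2)a(z)a^\star(z)&-\Theta(z^2)a(z)a^\star(-z)\\-\Theta(z^2)a(-z)a^\star(z)&\Theta(-z)-\Theta(z^2)a(-z)a^\star(-z)\end{bmatrix}$. $s^\pm_{a,\Theta}:=\max_{z\in\mathbb{T}}\nu_\pm(\mathcal M_{a,\Theta}(z))$ where $\nu_\pm(H)$ are the numbers of positive/negative eigenvalues of a Hermitian matrix $H$. *)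

theory Defs
  imports Complex_Main "Jordan_Normal_Form.Char_Poly"
begin

text \<open>Filters in l_0(Z) are finitely supported functions int => complex
  (finite support is stated as an explicit hypothesis).
  Symbol (Laurent polynomial) u(z) = sum_k u(k) z^k.\<close>
definition symb :: "(int \<Rightarrow> complex) \<Rightarrow> complex \<Rightarrow> complex" where
  "symb u z = (\<Sum>k\<in>{k. u k \<noteq> 0}. u k * z powi k)"

definition symb_star :: "(int \<Rightarrow> complex) \<Rightarrow> complex \<Rightarrow> complex" where
  "symb_star u z = (\<Sum>k\<in>{k. u k \<noteq> 0}. cnj (u k) * z powi (- k))"

definition unit_circle :: "complex set" where
  "unit_circle = {z. cmod z = 1}"

definition Mmat :: "(int \<Rightarrow> complex) \<Rightarrow> (int \<Rightarrow> complex) \<Rightarrow> complex \<Rightarrow> complex mat" where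
  "Mmat a \<Theta> z = mat 2 2 (\<lambda>(i,j).
     if i = 0 \<and> j = 0 then symb \<Theta> z - symb \<Theta> (z^2) * symb a z * symb_star a z
     else if i = 0 \<and> j = 1 then - symb \<Theta> (z^2) * symb a z * symb_star a (-z)
     else if i = 1 \<and> j = 0 then - symb \<Theta> (z^2) * symb a (-z) * symb_star a z
     else symb \<Theta> (-z) - symb \<Theta> (z^2) * symb a (-z) * symb_star a (-z))"

definition nu_pos :: "complex mat \<Rightarrow> nat" where
  "nu_pos H = (\<Sum>x\<in>{x. poly (char_poly H) x = 0 \<and> x \<in> \<real> \<and> Re x > 0}. order x (char_poly H))"

definition nu_neg :: "complex mat \<Rightarrow> nat" where
  "nu_neg H = (\<Sum>x\<in>{x. poly (char_poly H) x = 0 \<and> x \<in> \<real> \<and> Re x < 0}. order x (char_poly H))"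

definition s_pos :: "(int \<Rightarrow> complex) \<Rightarrow> (int \<Rightarrow> complex) \<Rightarrow> nat" where
  "s_pos a \<Theta> = Max ((\<lambda>z. nu_pos (Mmat a \<Theta> z)) ` unit_circle)"

definition s_neg :: "(int \<Rightarrow> complex) \<Rightarrow> (int \<Rightarrow> complex) \<Rightarrow> nat" where
  "s_neg a \<Theta> = Max ((\<lambda>z. nu_neg (Mmat a \<Theta> z)) ` unit_circle)"

end

theory Submission
  imports Defs "HOL-Complex_Analysis.Complex_Singularities"
begin

text \<open>
  Put \<open>F(z) = \<Theta>(z) a(-z) a\<^sup>\<star>(-z) + \<Theta>(-z) a(z) a\<^sup>\<star>(z)\<close>; then
  \<open>det M(z) = \<Theta>(z) \<Theta>(-z) - \<Theta>(z\<^sup>2) F(z)\<close>, so the hypothesis says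
  \<open>\<Theta>(z) \<Theta>(-z) = \<Theta>(z\<^sup>2) F(z)\<close>. Comparing the extreme coefficients of \<open>\<Theta>\<close> shows that
  \<open>F\<close> has nonzero limits at \<open>0\<close> and at \<open>\<infinity>\<close>, so by Liouville \<open>F\<close> is a nonzero constant
  \<open>r\<close>, real because \<open>F\<close> is real on \<open>\<bbbT>\<close>.

  On the circle \<open>\<theta>(t) = \<Theta>(e\<^sup>i\<^sup>t)\<close> is real, \<open>\<theta>(t) \<theta>(t + \<pi>) = r \<theta>(2t)\<close>, and at a zero
  \<open>\<alpha>\<close> of \<open>\<theta>\<close> we get \<open>\<theta>(\<alpha> + \<pi>) |a(e\<^sup>i\<^sup>\<alpha>)|\<^sup>2 = r\<close>, so \<open>sgn r \<cdot> \<theta>\<close> is positive opposite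
  each zero. If \<open>sgn r \<cdot> \<theta>\<close> were negative somewhere, it would be negative on an
  interval \<open>(\<alpha>, \<alpha> + L)\<close> starting at a zero; the doubling identity turns this into the
  interval \<open>(2\<alpha>, 2\<alpha> + 2L)\<close>, and after enough doublings the interval contains the point
  opposite its left end, a contradiction.

  Finally \<open>M(z)\<close> is singular with trace \<open>\<tau>\<close>, and
  \<open>r \<tau> = \<theta>(z)\<^sup>2 |a(-z)|\<^sup>2 + \<theta>(-z)\<^sup>2 |a(z)|\<^sup>2 > 0\<close>, so \<open>M(z)\<close> has exactly one nonzero
  eigenvalue, of the sign of \<open>r\<close>.
\<close>

hide_const (open) Finite_Cartesian_Product.mat Determinants.det

section \<open>Real functions satisfying a doubling identity\<close>

lemma continuous_zero_between:
  fixes f :: "real \<Rightarrow> real"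
  assumes "continuous_on UNIV f" and "a \<le> b"
    and "(f a \<le> 0 \<and> 0 \<le> f b) \<or> (f b \<le> 0 \<and> 0 \<le> f a)"
  shows "\<exists>x. a \<le> x \<and> x \<le> b \<and> f x = 0"
proof -
  have "continuous_on {a..b} f" using assms(1) continuous_on_subset by blast
  then show ?thesis using assms(2,3) IVT'[of f a 0 b] IVT2'[of f b 0 a] by auto
qed

lemma doubling_identity_has_zero:
  fixes f :: "real \<Rightarrow> real"
  assumes cont: "continuous_on UNIV f"
    and dbl: "\<And>\<theta>. f (2*\<theta>) * K = f \<theta> * f (\<theta> + pi)" and K: "K > 0"
    and neg: "f \<theta>\<^sub>0 < 0"
  shows "\<exists>\<zeta>. f \<zeta> = 0"
proof (rule ccontr)
  assume no_zero: "\<nexists>\<zeta>. f \<zeta> = 0"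
  have all_neg: "f x < 0" for x
  proof (rule ccontr)
    assume "\<not> f x < 0"
    then show False
      using continuous_zero_between[OF cont, of "min x \<theta>\<^sub>0" "max x \<theta>\<^sub>0"] neg no_zero
      by (cases "x \<le> \<theta>\<^sub>0") (auto simp: min_def max_def)
  qed
  have "f (2*\<theta>\<^sub>0) * K > 0"
    using dbl[of \<theta>\<^sub>0] all_neg[of \<theta>\<^sub>0] all_neg[of "\<theta>\<^sub>0 + pi"] by (simp add: mult_neg_neg)
  then show False using all_neg[of "2*\<theta>\<^sub>0"] K by (simp add: zero_less_mult_iff)
qed

lemma periodic_zero_below:
  fixes f :: "real \<Rightarrow> real"
  assumes per: "\<And>\<theta>. f (\<theta> + 2*pi) = f \<theta>" and zero: "f \<zeta> = 0"
  shows "\<exists>x < \<theta>\<^sub>0. f x = 0"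
proof -
  have shift: "f (x - real n * (2*pi)) = f x" for x n
  proof (induction n)
    case (Suc n)
    have "f (x - real (Suc n) * (2*pi)) = f (x - real (Suc n) * (2*pi) + 2*pi)"
      by (rule per[symmetric])
    also have "x - real (Suc n) * (2*pi) + 2*pi = x - real n * (2*pi)"
      by (simp add: algebra_simps)
    finally show ?case using Suc by simp
  qed simp
  obtain n :: nat where "(\<zeta> - \<theta>\<^sub>0) / (2*pi) < real n" using reals_Archimedean2 by blast
  then have "\<zeta> - real n * (2*pi) < \<theta>\<^sub>0" by (simp add: pos_divide_less_eq algebra_simps)
  moreover have "f (\<zeta> - real n * (2*pi)) = 0" using shift zero by simp
  ultimately show ?thesis by blast
qed

lemma last_zero_before_negative:
  fixes f :: "real \<Rightarrow> real"
  assumes cont: "continuous_on UNIV f" and neg: "f \<theta>\<^sub>0 < 0"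
    and zero: "f \<zeta> = 0" "\<zeta> \<le> \<theta>\<^sub>0"
  shows "\<exists>\<alpha> < \<theta>\<^sub>0. f \<alpha> = 0 \<and> (\<forall>\<theta>. \<alpha> < \<theta> \<longrightarrow> \<theta> \<le> \<theta>\<^sub>0 \<longrightarrow> f \<theta> < 0)"
proof -
  define S where "S = {x. x \<le> \<theta>\<^sub>0 \<and> f x = 0}"
  have S_ne: "S \<noteq> {}" using zero unfolding S_def by auto
  have S_bdd: "bdd_above S" unfolding S_def by (auto intro: bdd_aboveI)
  have "closed S" unfolding S_def
    by (intro closed_Collect_conj closed_Collect_le closed_Collect_eq cont continuous_intros)
  then have "Sup S \<in> S" using closed_contains_Sup[OF S_ne S_bdd] by blast
  then have sup: "f (Sup S) = 0" "Sup S < \<theta>\<^sub>0"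
    using neg unfolding S_def by (auto simp: order.order_iff_strict)
  have "f \<theta> < 0" if \<theta>: "Sup S < \<theta>" "\<theta> \<le> \<theta>\<^sub>0" for \<theta>
  proof (rule ccontr)
    assume "\<not> f \<theta> < 0"
    then obtain x where x: "\<theta> \<le> x" "x \<le> \<theta>\<^sub>0" "f x = 0"
      using continuous_zero_between[OF cont, of \<theta> \<theta>\<^sub>0] neg \<theta> by auto
    then have "x \<le> Sup S" using S_bdd by (intro cSup_upper) (auto simp: S_def)
    then show False using x \<theta> by simp
  qed
  with sup show ?thesis by blast
qed

lemma doubling_identity_negative_interval:
  fixes f :: "real \<Rightarrow> real"
  assumes cont: "continuous_on UNIV f"
    and per: "\<And>\<theta>. f (\<theta> + 2*pi) = f \<theta>"
    and dbl: "\<And>\<theta>. f (2*\<theta>) * K = f \<theta> * f (\<theta> + pi)" and K: "K > 0"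
    and opposite_zero: "\<And>\<alpha>. f \<alpha> = 0 \<Longrightarrow> f (\<alpha> + pi) > 0"
    and zero: "f \<beta> = 0" and neg: "\<And>\<theta>. \<beta> < \<theta> \<Longrightarrow> \<theta> < \<beta> + L \<Longrightarrow> f \<theta> < 0"
  shows "f (2*\<beta>) = 0 \<and> (\<forall>\<theta>. 2*\<beta> < \<theta> \<longrightarrow> \<theta> < 2*\<beta> + 2*L \<longrightarrow> f \<theta> < 0)"
proof
  show "f (2*\<beta>) = 0" using dbl[of \<beta>] zero K by simp
  have cont_shift: "continuous_on UNIV (\<lambda>x. f (x + pi))"
    by (intro continuous_on_compose2[OF cont] continuous_intros) auto
  have pos: "f (\<theta> + pi) > 0" if \<theta>: "\<beta> < \<theta>" "\<theta> < \<beta> + L" for \<theta>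
  proof (rule ccontr)
    assume "\<not> f (\<theta> + pi) > 0"
    moreover have "f (\<beta> + pi) > 0" using opposite_zero zero by simp
    ultimately obtain x where x: "\<beta> \<le> x" "x \<le> \<theta>" "f (x + pi) = 0"
      using continuous_zero_between[OF cont_shift, of \<beta> \<theta>] \<theta> by auto
    have "x \<noteq> \<beta>" using x(3) opposite_zero zero by force
    then have "f x < 0" using neg x \<theta> by simp
    moreover have "f (x + pi + pi) > 0" using opposite_zero[OF x(3)] by simp
    ultimately show False using per[of x] by (simp add: add.assoc)
  qed
  show "\<forall>\<theta>. 2*\<beta> < \<theta> \<longrightarrow> \<theta> < 2*\<beta> + 2*L \<longrightarrow> f \<theta> < 0"
  proof (intro allI impI)
    fix \<theta> assume "2*\<beta> < \<theta>" "\<theta> < 2*\<beta> + 2*L"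
    then have h: "\<beta> < \<theta>/2" "\<theta>/2 < \<beta> + L" by auto
    have "f (2*(\<theta>/2)) * K = f (\<theta>/2) * f (\<theta>/2 + pi)" by (rule dbl)
    also have "\<dots> < 0" using neg[OF h] pos[OF h] by (simp add: mult_neg_pos)
    finally show "f \<theta> < 0" using K by (simp add: mult_less_0_iff)
  qed
qed

lemma doubling_identity_nonneg:
  fixes f :: "real \<Rightarrow> real"
  assumes cont: "continuous_on UNIV f"
    and per: "\<And>\<theta>. f (\<theta> + 2*pi) = f \<theta>"
    and dbl: "\<And>\<theta>. f (2*\<theta>) * K = f \<theta> * f (\<theta> + pi)" and K: "K > 0"
    and opposite_zero: "\<And>\<alpha>. f \<alpha> = 0 \<Longrightarrow> f (\<alpha> + pi) > 0"
  shows "f \<theta>\<^sub>0 \<ge> 0"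
proof (rule ccontr)
  assume "\<not> f \<theta>\<^sub>0 \<ge> 0"
  then have neg: "f \<theta>\<^sub>0 < 0" by simp
  obtain \<zeta> where "f \<zeta> = 0" using doubling_identity_has_zero[OF cont dbl K neg] by blast
  then obtain \<zeta>' where "f \<zeta>' = 0" "\<zeta>' < \<theta>\<^sub>0" using periodic_zero_below[where f = f, OF per] by blast
  then obtain \<alpha> where \<alpha>: "\<alpha> < \<theta>\<^sub>0" "f \<alpha> = 0" "\<forall>\<theta>. \<alpha> < \<theta> \<longrightarrow> \<theta> \<le> \<theta>\<^sub>0 \<longrightarrow> f \<theta> < 0"
    using last_zero_before_negative[OF cont neg] by (metis less_imp_le)
  define L where "L = \<theta>\<^sub>0 - \<alpha>"
  have iter: "f (2^m * \<alpha>) = 0 \<and> (\<forall>\<theta>. 2^m*\<alpha> < \<theta> \<longrightarrow> \<theta> < 2^m*\<alpha> + 2^m*L \<longrightarrow> f \<theta> < 0)"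
    for m :: nat
  proof (induction m)
    case 0
    then show ?case using \<alpha> L_def by auto
  next
    case (Suc m)
    then have "f (2*(2^m*\<alpha>)) = 0 \<and>
        (\<forall>\<theta>. 2*(2^m*\<alpha>) < \<theta> \<longrightarrow> \<theta> < 2*(2^m*\<alpha>) + 2*(2^m*L) \<longrightarrow> f \<theta> < 0)"
      by (intro doubling_identity_negative_interval[OF cont per dbl K opposite_zero]) auto
    then show ?case by (simp add: mult.assoc)
  qed
  have "L > 0" using \<alpha>(1) L_def by simp
  obtain m :: nat where "pi / L < 2^m" using real_arch_pow[of 2 "pi / L"] by auto
  then have "pi < 2^m * L" using \<open>L > 0\<close> by (simp add: field_simps)
  then have "f (2^m*\<alpha> + pi) < 0" using iter[of m] by auto
  moreover have "f (2^m*\<alpha> + pi) > 0" using opposite_zero iter[of m] by auto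
  ultimately show False by simp
qed

section \<open>Laurent polynomials satisfying a doubling identity are constant\<close>

lemma filterlim_uminus_at_infinity: "filterlim uminus at_infinity (at_infinity :: complex filter)"
  unfolding filterlim_at_infinity[OF order_refl] eventually_at_infinity by (auto intro: exI)

lemma filterlim_square_at_infinity: "filterlim (\<lambda>z::complex. z^2) at_infinity at_infinity"
  by (intro filterlim_power_at_infinity filterlim_ident) simp

lemma filterlim_uminus_at_0: "filterlim uminus (at (0::complex)) (at 0)"
proof (rule filterlim_atI)
  show "((\<lambda>x::complex. - x) \<longlongrightarrow> 0) (at 0)"
    using tendsto_minus[OF tendsto_ident_at[of "0::complex" UNIV]] by simp
qed (simp add: eventually_at_filter)

lemma filterlim_square_at_0: "filterlim (\<lambda>z::complex. z^2) (at 0) (at 0)"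
proof (rule filterlim_atI)
  show "((\<lambda>x::complex. x^2) \<longlongrightarrow> 0) (at 0)"
    using tendsto_power[OF tendsto_ident_at[of "0::complex" UNIV], of 2] by simp
qed (simp add: eventually_at_filter)

lemma eventually_nonzero_at_infinity: "eventually (\<lambda>z::complex. z \<noteq> 0) at_infinity"
  unfolding eventually_at_infinity by (rule exI[of _ 1]) auto

lemma symb_times_power_int_tendsto:
  assumes fin: "finite {k. u k \<noteq> 0}"
    and nonzero: "eventually (\<lambda>z. z \<noteq> 0) F"
    and vanish: "\<And>k. u k \<noteq> 0 \<Longrightarrow> k \<noteq> D \<Longrightarrow> ((\<lambda>z::complex. z powi (k - D)) \<longlongrightarrow> 0) F"
  shows "((\<lambda>z. symb u z * z powi (-D)) \<longlongrightarrow> u D) F"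
proof -
  let ?S = "{k. u k \<noteq> 0}"
  have "((\<lambda>z. \<Sum>k\<in>?S. u k * z powi (k - D)) \<longlongrightarrow> (\<Sum>k\<in>?S. if k = D then u k else 0)) F"
  proof (rule tendsto_sum)
    fix k assume k: "k \<in> ?S"
    show "((\<lambda>z. u k * z powi (k - D)) \<longlongrightarrow> (if k = D then u k else 0)) F"
    proof (cases "k = D")
      case True
      have "\<forall>\<^sub>F z in F. u k = u k * z powi (k - D)"
        using nonzero True by (auto elim: eventually_mono)
      then show ?thesis using True by (auto intro: tendsto_eventually)
    next
      case False
      then show ?thesis using vanish[of k] k tendsto_mult_right_zero by fastforce
    qed
  qed
  moreover have "(\<Sum>k\<in>?S. if k = D then u k else 0) = u D"
    using fin by (simp add: sum.delta)
  moreover have "\<forall>\<^sub>F z in F. (\<Sum>k\<in>?S. u k * z powi (k - D)) = symb u z * z powi (-D)"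
    using nonzero
    by (rule eventually_mono)
       (auto simp: symb_def sum_distrib_right power_int_add[symmetric] intro!: sum.cong)
  ultimately show ?thesis using Lim_transform_eventually by fastforce
qed

lemma symb_tendsto_at_infinity:
  assumes fin: "finite {k. u k \<noteq> 0}" and "u \<noteq> (\<lambda>_. 0)"
  shows "((\<lambda>z. symb u z * z powi (- Max {k. u k \<noteq> 0})) \<longlongrightarrow> u (Max {k. u k \<noteq> 0})) at_infinity"
proof (rule symb_times_power_int_tendsto[OF fin eventually_nonzero_at_infinity])
  fix k assume "u k \<noteq> 0" "k \<noteq> Max {k. u k \<noteq> 0}"
  then have lt: "k - Max {k. u k \<noteq> 0} < 0" using Max_ge[OF fin, of k] by auto
  have "((\<lambda>z::complex. inverse z ^ nat (- (k - Max {k. u k \<noteq> 0}))) \<longlongrightarrow> 0) at_infinity"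
    using lt tendsto_power[OF tendsto_inverse_0, of "nat (- (k - Max {k. u k \<noteq> 0}))"]
    by (simp add: power_0_left)
  then show "((\<lambda>z::complex. z powi (k - Max {k. u k \<noteq> 0})) \<longlongrightarrow> 0) at_infinity"
    using lt by (simp add: power_int_def)
qed

lemma symb_tendsto_at_0:
  assumes fin: "finite {k. u k \<noteq> 0}" and "u \<noteq> (\<lambda>_. 0)"
  shows "((\<lambda>z. symb u z * z powi (- Min {k. u k \<noteq> 0})) \<longlongrightarrow> u (Min {k. u k \<noteq> 0})) (at 0)"
proof (rule symb_times_power_int_tendsto[OF fin])
  show "\<forall>\<^sub>F z in at 0. z \<noteq> (0::complex)" by (simp add: eventually_at_filter)
  fix k assume "u k \<noteq> 0" "k \<noteq> Min {k. u k \<noteq> 0}"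
  then have gt: "k - Min {k. u k \<noteq> 0} > 0" using Min_le[OF fin, of k] by auto
  have "((\<lambda>z::complex. z ^ nat (k - Min {k. u k \<noteq> 0})) \<longlongrightarrow> 0) (at 0)"
    using gt tendsto_power[OF tendsto_ident_at[of "0::complex" UNIV], of "nat (k - Min {k. u k \<noteq> 0})"]
    by (simp add: power_0_left)
  then show "((\<lambda>z::complex. z powi (k - Min {k. u k \<noteq> 0})) \<longlongrightarrow> 0) (at 0)"
    using gt by (simp add: power_int_def)
qed

lemma power_int_neg_uminus_mult:
  fixes z :: complex
  assumes "z \<noteq> 0"
  shows "z powi (-D) * (-z) powi (-D) * (-1) powi D = (z^2) powi (-D)"
proof -
  have "(-z) powi (-D) = (-1) powi (-D) * z powi (-D)"
    using power_int_mult_distrib[of "-1" z "-D"] by simp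
  moreover have "(-1::complex) powi (-D) * (-1) powi D = 1"
    by (simp add: power_int_minus)
  moreover have "(z^2) powi (-D) = z powi (-D) * z powi (-D)"
    using power_int_mult_distrib[of z z "-D"] by (simp add: power2_eq_square)
  ultimately show ?thesis by (simp add: algebra_simps)
qed

text \<open>If \<open>\<Theta>(z) \<sim> c z\<^sup>D\<close> along a filter invariant under \<open>z \<mapsto> -z\<close> and \<open>z \<mapsto> z\<^sup>2\<close>, then
  \<open>G = \<Theta>(z) \<Theta>(-z) / \<Theta>(z\<^sup>2) \<sim> c\<^sup>2 (-1)\<^sup>D z\<^sup>2\<^sup>D / (c z\<^sup>2\<^sup>D)\<close> tends to \<open>c (-1)\<^sup>D\<close>.\<close>
lemma tendsto_of_symb_doubling_identity:
  assumes lim: "((\<lambda>z. symb \<Theta> z * z powi (-D)) \<longlongrightarrow> c) F" and c: "c \<noteq> 0"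
    and um: "filterlim uminus F F" and sq: "filterlim (\<lambda>z::complex. z^2) F F"
    and nonzero: "eventually (\<lambda>z. z \<noteq> 0) F"
    and idt: "\<And>z. z \<noteq> 0 \<Longrightarrow> symb \<Theta> z * symb \<Theta> (-z) = symb \<Theta> (z^2) * G z"
  shows "(G \<longlongrightarrow> c * (-1) powi D) F"
proof -
  let ?q = "\<lambda>z. symb \<Theta> z * z powi (-D)"
  have lim_uminus: "((\<lambda>z. ?q (-z)) \<longlongrightarrow> c) F" using filterlim_compose[OF lim um] .
  have lim_square: "((\<lambda>z. ?q (z^2)) \<longlongrightarrow> c) F" using filterlim_compose[OF lim sq] .
  have "((\<lambda>z. ?q z * ?q (-z) / ?q (z^2) * (-1) powi D) \<longlongrightarrow> c * c / c * (-1) powi D) F"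
    by (intro tendsto_intros lim lim_uminus lim_square c)
  moreover have "c * c / c * (-1) powi D = c * (-1) powi D" using c by simp
  moreover have "eventually (\<lambda>z. ?q z * ?q (-z) / ?q (z^2) * (-1) powi D = G z) F"
    using nonzero tendsto_imp_eventually_ne[OF lim_square c]
  proof eventually_elim
    case (elim z)
    have "?q z * ?q (-z) / ?q (z^2) * (-1) powi D
        = (symb \<Theta> z * symb \<Theta> (-z)) * (z powi (-D) * (-z) powi (-D) * (-1) powi D) / ?q (z^2)"
      by (simp add: algebra_simps)
    also have "\<dots> = G z"
      using elim idt[OF elim(1)] power_int_neg_uminus_mult[OF elim(1)] by (simp add: field_simps)
    finally show ?case .
  qed
  ultimately show ?thesis using Lim_transform_eventually by fastforce
qed

lemma constant_of_symb_doubling_identity: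
  assumes fin: "finite {k. \<Theta> k \<noteq> 0}" and ne: "\<Theta> \<noteq> (\<lambda>_. 0)"
    and idt: "\<And>z. z \<noteq> 0 \<Longrightarrow> symb \<Theta> z * symb \<Theta> (-z) = symb \<Theta> (z^2) * G z"
    and holo: "G holomorphic_on (UNIV - {0})"
  shows "\<exists>c. c \<noteq> 0 \<and> (\<forall>z. z \<noteq> 0 \<longrightarrow> G z = c)"
proof -
  let ?S = "{k. \<Theta> k \<noteq> 0}"
  have "?S \<noteq> {}" using ne by auto
  then have max_ne: "\<Theta> (Max ?S) \<noteq> 0" and min_ne: "\<Theta> (Min ?S) \<noteq> 0"
    using Max_in[OF fin] Min_in[OF fin] by auto
  define c_inf where "c_inf = \<Theta> (Max ?S) * (-1) powi (Max ?S)"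
  define c_0 where "c_0 = \<Theta> (Min ?S) * (-1) powi (Min ?S)"
  have lim_inf: "(G \<longlongrightarrow> c_inf) at_infinity"
    unfolding c_inf_def
    by (rule tendsto_of_symb_doubling_identity[OF symb_tendsto_at_infinity[OF fin ne] max_ne
          filterlim_uminus_at_infinity filterlim_square_at_infinity eventually_nonzero_at_infinity idt])
  have lim_0: "(G \<longlongrightarrow> c_0) (at 0)"
    unfolding c_0_def
    by (rule tendsto_of_symb_doubling_identity[OF symb_tendsto_at_0[OF fin ne] min_ne
          filterlim_uminus_at_0 filterlim_square_at_0 _ idt]) (simp add: eventually_at_filter)
  define g where "g = (\<lambda>z. if z = 0 then c_0 else G z)"
  have "g holomorphic_on UNIV"
    unfolding g_def by (rule removable_singularity[OF holo open_UNIV lim_0])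
  moreover have "(g \<longlongrightarrow> c_inf) at_infinity"
    using lim_inf eventually_nonzero_at_infinity
    by (rule Lim_transform_eventually[OF _ eventually_mono]) (simp add: g_def)
  ultimately have "g z = c_inf" for z using Liouville_weak by blast
  moreover have "c_inf \<noteq> 0" unfolding c_inf_def using max_ne by simp
  ultimately show ?thesis unfolding g_def by metis
qed

lemma symb_star_on_circle:
  assumes "cmod z = 1"
  shows "symb_star u z = cnj (symb u z)"
proof -
  have "cnj z = inverse z"
    using assms by (simp add: inverse_eq_divide complex_div_cnj[of 1 z])
  then show ?thesis
    unfolding symb_star_def symb_def cnj_sum
    by (intro sum.cong refl) (simp add: complex_cnj_power_int power_int_minus power_int_inverse)
qed

lemma symb_times_symb_star_on_circle:
  assumes "cmod z = 1"
  shows "symb u z * symb_star u z = complex_of_real ((cmod (symb u z))\<^sup>2)"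
  using symb_star_on_circle[OF assms] complex_norm_square[of "symb u z"] by simp

lemma symb_real_on_circle:
  assumes sym: "\<forall>k. \<Theta> (- k) = cnj (\<Theta> k)" and z: "cmod z = 1"
  shows "symb \<Theta> z \<in> \<real>"
proof -
  have "cnj (symb \<Theta> z) = (\<Sum>k\<in>{k. \<Theta> k \<noteq> 0}. \<Theta> (-k) * z powi (- k))"
    unfolding symb_star_on_circle[OF z, symmetric] symb_star_def using sym by simp
  also have "\<dots> = symb \<Theta> z"
    unfolding symb_def
    by (rule sum.reindex_bij_witness[of _ uminus uminus]) (auto simp: sym)
  finally show ?thesis by (simp add: Reals_cnj_iff)
qed

section \<open>Singular two by two matrices\<close>

lemma det_2x2:
  fixes A :: "'a::comm_ring_1 mat"
  assumes A: "A \<in> carrier_mat 2 2"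
  shows "det A = A$$(0,0) * A$$(1,1) - A$$(0,1) * A$$(1,0)"
proof -
  have "det A = (\<Sum>i<2. A $$ (i,0) * cofactor A i 0)"
    by (rule laplace_expansion_column[OF A]) simp
  also have "\<dots> = A $$ (0,0) * cofactor A 0 0 + A $$ (1,0) * cofactor A 1 0"
    by (simp add: numeral_2_eq_2)
  also have "cofactor A 0 0 = A$$(1,1)"
    unfolding cofactor_def using A
    by (subst det_single[of "mat_delete A 0 0"]) (auto simp: mat_delete_def)
  also have "cofactor A 1 0 = - A$$(0,1)"
    unfolding cofactor_def using A
    by (subst det_single[of "mat_delete A 1 0"]) (auto simp: mat_delete_def)
  finally show ?thesis by (simp add: algebra_simps)
qed

lemma char_poly_2x2:
  fixes A :: "'a::comm_ring_1 mat"
  assumes A: "A \<in> carrier_mat 2 2"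
  shows "char_poly A = [: det A, - (A$$(0,0) + A$$(1,1)), 1:]"
  unfolding char_poly_def det_2x2[OF char_poly_matrix_closed[OF A]] det_2x2[OF A] using A
  by (simp add: char_poly_matrix_def algebra_simps)

lemma nu_singular_2x2:
  fixes A :: "complex mat"
  assumes A: "A \<in> carrier_mat 2 2" and "det A = 0"
    and tr: "A$$(0,0) + A$$(1,1) = complex_of_real \<tau>"
  shows "nu_pos A = (if \<tau> > 0 then 1 else 0) \<and> nu_neg A = (if \<tau> < 0 then 1 else 0)"
proof -
  let ?t = "complex_of_real \<tau>"
  have "- (A$$(0,0) + A$$(1,1)) = - ?t" using tr by simp
  then have cp: "char_poly A = [:-?t, 1:] * [:0, 1:]"
    using char_poly_2x2[OF A] assms(2) by simp
  have roots: "poly (char_poly A) x = 0 \<longleftrightarrow> x = 0 \<or> x = ?t" for x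
    unfolding cp by auto
  have "order ?t (char_poly A) = 1" if "\<tau> \<noteq> 0"
  proof -
    have "order ?t [:0, 1:] = 0"
      using that order_root[of "[:0, 1::complex:]" ?t] by simp
    moreover have "order ?t [:-?t, 1:] = 1"
      using order_power_n_n[of ?t 1] by simp
    ultimately show ?thesis unfolding cp by (subst order_mult) simp_all
  qed
  moreover have "{x. poly (char_poly A) x = 0 \<and> x \<in> \<real> \<and> Re x > 0} = (if \<tau> > 0 then {?t} else {})"
    "{x. poly (char_poly A) x = 0 \<and> x \<in> \<real> \<and> Re x < 0} = (if \<tau> < 0 then {?t} else {})"
    using roots by auto
  ultimately show ?thesis unfolding nu_pos_def nu_neg_def by auto
qed

definition mixed_symb :: "(int \<Rightarrow> complex) \<Rightarrow> (int \<Rightarrow> complex) \<Rightarrow> complex \<Rightarrow> complex" where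
  "mixed_symb a \<Theta> z =
     symb \<Theta> z * symb a (-z) * symb_star a (-z) + symb \<Theta> (-z) * symb a z * symb_star a z"

lemma mixed_symb_holomorphic: "mixed_symb a \<Theta> holomorphic_on (UNIV - {0})"
  unfolding mixed_symb_def symb_def symb_star_def by (intro holomorphic_intros) auto

lemma Mmat_carrier: "Mmat a \<Theta> z \<in> carrier_mat 2 2"
  unfolding Mmat_def by simp

lemma det_Mmat: "det (Mmat a \<Theta> z) = symb \<Theta> z * symb \<Theta> (-z) - symb \<Theta> (z^2) * mixed_symb a \<Theta> z"
  unfolding det_2x2[OF Mmat_carrier] unfolding Mmat_def mixed_symb_def by (simp add: algebra_simps)

lemma mixed_symb_on_circle:
  assumes sym: "\<forall>k. \<Theta> (- k) = cnj (\<Theta> k)" and z: "cmod z = 1"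
  shows "mixed_symb a \<Theta> z = complex_of_real
    (Re (symb \<Theta> z) * (cmod (symb a (-z)))\<^sup>2 + Re (symb \<Theta> (-z)) * (cmod (symb a z))\<^sup>2)"
proof -
  have z': "cmod (-z) = 1" using z by simp
  obtain x y where x: "symb \<Theta> z = of_real x" and y: "symb \<Theta> (-z) = of_real y"
    using symb_real_on_circle[OF sym z] symb_real_on_circle[OF sym z'] by (metis Reals_cases)
  show ?thesis
    unfolding mixed_symb_def x y
    using symb_times_symb_star_on_circle[OF z] symb_times_symb_star_on_circle[OF z']
    by (simp add: mult.assoc)
qed

lemma mixed_symb_constant:
  assumes fin: "finite {k. \<Theta> k \<noteq> 0}" and ne: "\<Theta> \<noteq> (\<lambda>_. 0)"
    and sym: "\<forall>k. \<Theta> (- k) = cnj (\<Theta> k)"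
    and det: "\<forall>z. z \<noteq> 0 \<longrightarrow> det (Mmat a \<Theta> z) = 0"
  obtains r :: real where "r \<noteq> 0" "\<And>z. z \<noteq> 0 \<Longrightarrow> mixed_symb a \<Theta> z = complex_of_real r"
proof -
  have "symb \<Theta> z * symb \<Theta> (-z) = symb \<Theta> (z^2) * mixed_symb a \<Theta> z" if "z \<noteq> 0" for z
    using det that det_Mmat[of a \<Theta> z] by simp
  then obtain c where c: "c \<noteq> 0" "\<And>z. z \<noteq> 0 \<Longrightarrow> mixed_symb a \<Theta> z = c"
    using constant_of_symb_doubling_identity[OF fin ne _ mixed_symb_holomorphic] by blast
  have "c = mixed_symb a \<Theta> 1" using c(2) by simp
  also have "\<dots> \<in> \<real>" using mixed_symb_on_circle[OF sym, where z = 1] by (metis Reals_of_real norm_one)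
  finally obtain r where "c = complex_of_real r" by (auto elim: Reals_cases)
  with c show thesis by (intro that[of r]) auto
qed

lemma symb_doubling_on_circle:
  assumes sym: "\<forall>k. \<Theta> (- k) = cnj (\<Theta> k)" and det: "det (Mmat a \<Theta> z) = 0"
    and r: "mixed_symb a \<Theta> z = complex_of_real r" and z: "cmod z = 1"
  shows "Re (symb \<Theta> z) * Re (symb \<Theta> (-z)) = Re (symb \<Theta> (z^2)) * r"
proof -
  have "cmod (-z) = 1" "cmod (z^2) = 1" using z by (simp_all add: norm_power)
  then obtain x y t where x: "symb \<Theta> z = of_real x" and y: "symb \<Theta> (-z) = of_real y"
      and t: "symb \<Theta> (z^2) = of_real t"
    using symb_real_on_circle[OF sym] z by (metis Reals_cases)
  have "complex_of_real (x * y) = complex_of_real (t * r)"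
    using det r det_Mmat[of a \<Theta> z] unfolding x y t by simp
  then have "x * y = t * r" by (simp only: of_real_eq_iff)
  then show ?thesis unfolding x y t by simp
qed

lemma symb_opposite_zero_on_circle:
  assumes sym: "\<forall>k. \<Theta> (- k) = cnj (\<Theta> k)"
    and r: "r \<noteq> 0" "mixed_symb a \<Theta> w = complex_of_real r"
    and w: "cmod w = 1" and zero: "Re (symb \<Theta> w) = 0"
  shows "sgn r * Re (symb \<Theta> (-w)) > 0"
proof -
  define y p where "y = Re (symb \<Theta> (-w))" and "p = (cmod (symb a w))\<^sup>2"
  have "Re (symb \<Theta> w) * (cmod (symb a (-w)))\<^sup>2 + y * p = r"
    using r(2) mixed_symb_on_circle[OF sym w] unfolding y_def p_def by (metis of_real_eq_iff)
  then have "(sgn r * y) * p = \<bar>r\<bar>"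
    using zero by (simp add: mult.assoc sgn_mult_abs abs_sgn mult.commute)
  then have "(sgn r * y) * p > 0" using r(1) by simp
  moreover have "p \<ge> 0" unfolding p_def by simp
  ultimately show ?thesis unfolding y_def by (auto simp: zero_less_mult_iff)
qed

lemma symb_sign_on_circle:
  assumes sym: "\<forall>k. \<Theta> (- k) = cnj (\<Theta> k)"
    and det: "\<forall>z. z \<noteq> 0 \<longrightarrow> det (Mmat a \<Theta> z) = 0"
    and r: "r \<noteq> 0" "\<And>z. z \<noteq> 0 \<Longrightarrow> mixed_symb a \<Theta> z = complex_of_real r"
    and z: "cmod z = 1"
  shows "sgn r * Re (symb \<Theta> z) \<ge> 0"
proof -
  define f where "f t = sgn r * Re (symb \<Theta> (cis t))" for t
  have cis_pi: "cis (t + pi) = - cis t" for t by (simp add: cis_mult[symmetric] add.commute)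
  have nonneg: "f t \<ge> 0" for t
  proof (rule doubling_identity_nonneg[where f = f and K = "\<bar>r\<bar>"])
    show "continuous_on UNIV f"
      unfolding f_def symb_def by (intro continuous_intros) (auto simp: cis_neq_zero)
    show "f (t + 2*pi) = f t" for t
      unfolding f_def by (simp add: cis_mult[symmetric] add.commute)
    show "\<bar>r\<bar> > 0" using r(1) by simp
    show "f (2*t) * \<bar>r\<bar> = f t * f (t + pi)" for t
    proof -
      have "cis (2*t) = (cis t)^2" by (simp only: power2_eq_square cis_mult mult_2)
      then have "f (2*t) * \<bar>r\<bar> = (sgn r * \<bar>r\<bar>) * Re (symb \<Theta> ((cis t)^2))"
        unfolding f_def by (simp add: ac_simps)
      also have "\<dots> = Re (symb \<Theta> (cis t)) * Re (symb \<Theta> (- cis t))"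
        using symb_doubling_on_circle[OF sym _ r(2)] det by (simp add: sgn_mult_abs cis_neq_zero)
      also have "\<dots> = (sgn r * sgn r) * (Re (symb \<Theta> (cis t)) * Re (symb \<Theta> (- cis t)))"
        using r(1) by (simp add: sgn_real_def)
      finally show ?thesis unfolding f_def cis_pi by (simp add: ac_simps)
    qed
    show "f (\<alpha> + pi) > 0" if "f \<alpha> = 0" for \<alpha>
      using symb_opposite_zero_on_circle[OF sym r(1) r(2)[OF cis_neq_zero] norm_cis] that r(1)
      unfolding f_def cis_pi by (simp add: sgn_zero_iff)
  qed
  have "z \<noteq> 0" using z by auto
  then have "cis (Arg z) = z" using z by (simp add: cis_Arg sgn_eq)
  then show ?thesis using nonneg[of "Arg z"] unfolding f_def by simp
qed

lemma trace_times_mixed_pos: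
  fixes x y t p q r :: real
  assumes "p \<ge> 0" "q \<ge> 0" and mixed: "x * q + y * p = r" and "r \<noteq> 0"
    and doubling: "x * y = t * r"
  shows "r * (x - t * p + (y - t * q)) > 0"
proof -
  have "r * (x - t * p + (y - t * q)) = (x * q + y * p) * (x + y) - (x * y) * (p + q)"
    using mixed doubling by (simp add: algebra_simps)
  also have "\<dots> = x * x * q + y * y * p" by (simp add: algebra_simps)
  finally have eq: "r * (x - t * p + (y - t * q)) = x * x * q + y * y * p" .
  have "x * q \<noteq> 0 \<or> y * p \<noteq> 0" using assms by auto
  then have "x * x * q > 0 \<or> y * y * p > 0" using assms by (auto simp: zero_less_mult_iff)
  moreover have "x * x * q \<ge> 0" "y * y * p \<ge> 0" using assms by auto
  ultimately show ?thesis unfolding eq by linarith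
qed

lemma nu_Mmat_on_circle:
  assumes sym: "\<forall>k. \<Theta> (- k) = cnj (\<Theta> k)" and det: "det (Mmat a \<Theta> z) = 0"
    and r: "r \<noteq> 0" "mixed_symb a \<Theta> z = complex_of_real r" and z: "cmod z = 1"
  shows "nu_pos (Mmat a \<Theta> z) = (if r > 0 then 1 else 0)
    \<and> nu_neg (Mmat a \<Theta> z) = (if r < 0 then 1 else 0)"
proof -
  have z': "cmod (-z) = 1" "cmod (z^2) = 1" using z by (simp_all add: norm_power)
  then obtain x y t where x: "symb \<Theta> z = of_real x" and y: "symb \<Theta> (-z) = of_real y"
      and t: "symb \<Theta> (z^2) = of_real t"
    using symb_real_on_circle[OF sym] z by (metis Reals_cases)
  define p q where "p = (cmod (symb a z))\<^sup>2" and "q = (cmod (symb a (-z)))\<^sup>2"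
  define \<tau> where "\<tau> = x - t * p + (y - t * q)"
  have trace: "Mmat a \<Theta> z $$ (0,0) + Mmat a \<Theta> z $$ (1,1) = complex_of_real \<tau>"
    unfolding Mmat_def x y t p_def q_def \<tau>_def
    using symb_times_symb_star_on_circle[OF z] symb_times_symb_star_on_circle[OF z'(1)]
    by (simp add: mult.assoc)
  have "r * \<tau> > 0"
    unfolding \<tau>_def
  proof (rule trace_times_mixed_pos)
    show "p \<ge> 0" "q \<ge> 0" "r \<noteq> 0" unfolding p_def q_def using r(1) by simp_all
    have "Re (symb \<Theta> z) * q + Re (symb \<Theta> (-z)) * p = r"
      using r(2) mixed_symb_on_circle[OF sym z, of a] unfolding p_def q_def by (metis of_real_eq_iff)
    then show "x * q + y * p = r" unfolding x y by simp
    show "x * y = t * r" using symb_doubling_on_circle[OF sym det r(2) z] unfolding x y t by simp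
  qed
  then have "\<tau> > 0 \<longleftrightarrow> r > 0" "\<tau> < 0 \<longleftrightarrow> r < 0" by (auto simp: zero_less_mult_iff)
  then show ?thesis using nu_singular_2x2[OF Mmat_carrier det trace] by simp
qed

lemma Max_image_constant:
  assumes "x \<in> A" "\<And>y. y \<in> A \<Longrightarrow> g y = (v::'b::linorder)"
  shows "Max (g ` A) = v"
proof -
  have "g ` A = {v}" using assms by auto
  then show ?thesis by simp
qed

lemma s_pos_s_neg_eq:
  assumes sym: "\<forall>k. \<Theta> (- k) = cnj (\<Theta> k)"
    and det: "\<forall>z. z \<noteq> 0 \<longrightarrow> det (Mmat a \<Theta> z) = 0"
    and r: "r \<noteq> 0" "\<And>z. z \<noteq> 0 \<Longrightarrow> mixed_symb a \<Theta> z = complex_of_real r"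
  shows "s_pos a \<Theta> = (if r > 0 then 1 else 0) \<and> s_neg a \<Theta> = (if r < 0 then 1 else 0)"
proof -
  have "nu_pos (Mmat a \<Theta> z) = (if r > 0 then 1 else 0)"
    "nu_neg (Mmat a \<Theta> z) = (if r < 0 then 1 else 0)" if "z \<in> unit_circle" for z
  proof -
    have "cmod z = 1" "z \<noteq> 0" using that unfolding unit_circle_def by auto
    then show "nu_pos (Mmat a \<Theta> z) = (if r > 0 then 1 else 0)"
      "nu_neg (Mmat a \<Theta> z) = (if r < 0 then 1 else 0)"
      using nu_Mmat_on_circle[OF sym _ r(1) r(2)] det by blast+
  qed
  moreover have "1 \<in> unit_circle" unfolding unit_circle_def by simp
  ultimately show ?thesis
    unfolding s_pos_def s_neg_def by (simp add: Max_image_constant)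
qed

lemma symb_or_opposite_nonzero_on_circle:
  assumes sym: "\<forall>k. \<Theta> (- k) = cnj (\<Theta> k)"
    and r: "r \<noteq> 0" "mixed_symb a \<Theta> z = complex_of_real r" and z: "cmod z = 1"
  shows "Re (symb \<Theta> z) \<noteq> 0 \<or> Re (symb \<Theta> (-z)) \<noteq> 0"
  using r mixed_symb_on_circle[OF sym z, of a] by force

theorem mainTheorem15:
  fixes a \<Theta> :: "int \<Rightarrow> complex"
  assumes "finite {k. a k \<noteq> 0}" and "finite {k. \<Theta> k \<noteq> 0}"
    and "a \<noteq> (\<lambda>_. 0)" and "\<Theta> \<noteq> (\<lambda>_. 0)"
    and "\<forall>k. \<Theta> (- k) = cnj (\<Theta> k)"
    and "\<forall>z. z \<noteq> 0 \<longrightarrow> det (Mmat a \<Theta> z) = 0"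
  shows "((\<forall>z\<in>unit_circle. Re (symb \<Theta> z) \<ge> 0) \<or> (\<forall>z\<in>unit_circle. Re (symb \<Theta> z) \<le> 0))
    \<and> ((\<forall>z\<in>unit_circle. Re (symb \<Theta> z) \<ge> 0) \<longleftrightarrow> s_pos a \<Theta> = 1 \<and> s_neg a \<Theta> = 0)
    \<and> ((\<forall>z\<in>unit_circle. Re (symb \<Theta> z) \<le> 0) \<longleftrightarrow> s_pos a \<Theta> = 0 \<and> s_neg a \<Theta> = 1)"
proof -
  obtain r where r: "r \<noteq> 0" "\<And>z. z \<noteq> 0 \<Longrightarrow> mixed_symb a \<Theta> z = complex_of_real r"
    using mixed_symb_constant[OF assms(2,4,5,6)] by blast
  have circle: "z \<in> unit_circle \<longleftrightarrow> cmod z = 1" for z unfolding unit_circle_def by simp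
  have sign: "sgn r * Re (symb \<Theta> z) \<ge> 0" if "z \<in> unit_circle" for z
    using symb_sign_on_circle[OF assms(5,6) r] that circle by blast
  have s: "s_pos a \<Theta> = (if r > 0 then 1 else 0)" "s_neg a \<Theta> = (if r < 0 then 1 else 0)"
    using s_pos_s_neg_eq[OF assms(5,6) r] by simp_all
  have "1 \<in> unit_circle" "-1 \<in> unit_circle" by (simp_all add: circle)
  then have not_both:
    "\<not> ((\<forall>z\<in>unit_circle. Re (symb \<Theta> z) \<ge> 0) \<and> (\<forall>z\<in>unit_circle. Re (symb \<Theta> z) \<le> 0))"
    using symb_or_opposite_nonzero_on_circle[OF assms(5) r(1) r(2)] by (meson order_antisym one_neq_zero norm_one)
  show ?thesis
  proof (cases "r > 0")
    case True
    then have "\<forall>z\<in>unit_circle. Re (symb \<Theta> z) \<ge> 0" using sign by simp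
    then show ?thesis using not_both s True by auto
  next
    case False
    then have "r < 0" using r(1) by simp
    then have "\<forall>z\<in>unit_circle. Re (symb \<Theta> z) \<le> 0" using sign by fastforce
    then show ?thesis using not_both s \<open>r < 0\<close> by auto
  qed
qed

end
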